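(* For all integers $m\ge1$ and $n\ge1$, $$M(\mathcal G(m,-2-n))=\epsilon_{m,n}\,T(m,n),$$ where $T(m,n)$ is the number of perfect matchings of the $m$-by-$n$ grid graph and $\epsilon_{m,n}=-1$ if $m\equiv2\pmod 4$ and $n$ is odd, $\epsilon_{m,n}=+1$ otherwise. Moreover, every perfect matching of $\mathcal G(m,-2-n)$ has the same sign $\epsilon_{m,n}$.
   Context: Grid conventions: an $m$-by-$N$ grid has vertices $(i,j)$, $1\le i\le m$ (rows), $1\le j\le N$ (columns); horizontal edges join $(i,j),(i,j+1)$, vertical edges join $(i,j),(i+1,j)$. A signed graph is a graph each of whose edges carries a sign $+1$ or $-1$. For a signed graph $\mathcal G$, $M(\mathcal G)$ denotes the sum over all perfect matchings of $\mathcal G$ of the product of the signs of the edges in the matching. For $n\le 0$, $\mathcal G(m,n)$ has the vertex set of the $m$-by-$(2-n)$ grid, all horizontal edges of that grid with sign $+1$, the vertical edges lying in columns $2,3,\dots,1-n$ with sign $-1$, and no vertical edges in columns $1$ and $2-n$. *)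

theory Defs
  imports Main
begin

type_synonym vertex = "nat \<times> nat"
type_synonym edge = "vertex set"

text \<open>A signed graph: vertex set, edge set (edges are 2-element vertex sets), sign function.\<close>
type_synonym signed_graph = "vertex set \<times> edge set \<times> (edge \<Rightarrow> int)"

definition perfect_matchings :: "vertex set \<Rightarrow> edge set \<Rightarrow> edge set set" where
  "perfect_matchings V E = {M. M \<subseteq> E \<and> (\<forall>v\<in>V. \<exists>!e. e \<in> M \<and> v \<in> e)}"

definition grid_vertices :: "nat \<Rightarrow> nat \<Rightarrow> vertex set" where
  "grid_vertices m N = {1..m} \<times> {1..N}"

definition horiz_edges :: "nat \<Rightarrow> nat \<Rightarrow> edge set" where
  "horiz_edges m N = {{(i,j),(i,j+1)} | i j. 1 \<le> i \<and> i \<le> m \<and> 1 \<le> j \<and> j + 1 \<le> N}"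

definition vert_edges :: "nat \<Rightarrow> nat \<Rightarrow> nat set \<Rightarrow> edge set" where
  "vert_edges m N C = {{(i,j),(i+1,j)} | i j. 1 \<le> i \<and> i + 1 \<le> m \<and> 1 \<le> j \<and> j \<le> N \<and> j \<in> C}"

definition grid_edges :: "nat \<Rightarrow> nat \<Rightarrow> edge set" where
  "grid_edges m N = horiz_edges m N \<union> vert_edges m N UNIV"

definition T :: "nat \<Rightarrow> nat \<Rightarrow> nat" where
  "T m n = card (perfect_matchings (grid_vertices m n) (grid_edges m n))"

definition matching_sign :: "signed_graph \<Rightarrow> edge set \<Rightarrow> int" where
  "matching_sign G M = (\<Prod>e\<in>M. (snd (snd G)) e)"

definition M_signed :: "signed_graph \<Rightarrow> int" where
  "M_signed G = (\<Sum>M\<in>perfect_matchings (fst G) (fst (snd G)). matching_sign G M)"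

definition signed_pms :: "signed_graph \<Rightarrow> edge set set" where
  "signed_pms G = perfect_matchings (fst G) (fst (snd G))"

text \<open>The signed graph G(m,n) for n \<le> 0 (on the m-by-(2-n) grid); for n > 0 left unspecified
  (only used with n \<le> 0).\<close>
definition calG :: "nat \<Rightarrow> int \<Rightarrow> signed_graph" where
  "calG m n = (let N = nat (2 - n) in
     (grid_vertices m N,
      horiz_edges m N \<union> vert_edges m N {2 .. nat (1 - n)},
      (\<lambda>e. if e \<in> horiz_edges m N then 1 else -1)))"

definition eps :: "nat \<Rightarrow> nat \<Rightarrow> int" where
  "eps m n = (if m mod 4 = 2 \<and> odd n then -1 else 1)"

end

theory Submission
  imports Defs
begin

(* The vertices of columns 1 and n + 4 of G(m, -2 - n) lie on a single edge each, so every perfect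
   matching contains the horizontal edges joining columns 1, 2 and n + 3, n + 4; deleting them
   leaves a copy of the m-by-n grid, hence there are T(m, n) perfect matchings.
   Only vertical edges carry the sign -1. A vertical edge covers exactly one vertex in an odd row
   and a horizontal edge zero or two, so the number of vertical edges of a perfect matching has the
   parity of ceil(m/2) (n + 4); this is odd exactly when m = 2 (mod 4) and n is odd (if m and n are
   both odd there is no perfect matching at all). *)

lemma perfect_matchingsI:
  assumes "M \<subseteq> E" "\<And>v. v \<in> V \<Longrightarrow> \<exists>e\<in>M. v \<in> e"
    and "\<And>v e e'. v \<in> V \<Longrightarrow> e \<in> M \<Longrightarrow> e' \<in> M \<Longrightarrow> v \<in> e \<Longrightarrow> v \<in> e'
      \<Longrightarrow> e = e'"
  shows "M \<in> perfect_matchings V E"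
  unfolding perfect_matchings_def mem_Collect_eq
proof (intro conjI ballI)
  fix v assume "v \<in> V"
  then obtain e where "e \<in> M" "v \<in> e" using assms(2) by blast
  then show "\<exists>!e. e \<in> M \<and> v \<in> e" using assms(3) \<open>v \<in> V\<close> by blast
qed (rule assms(1))

lemma perfect_matching_subset: "M \<in> perfect_matchings V E \<Longrightarrow> M \<subseteq> E"
  unfolding perfect_matchings_def by simp

lemma perfect_matching_covers:
  "M \<in> perfect_matchings V E \<Longrightarrow> v \<in> V \<Longrightarrow> \<exists>e\<in>M. v \<in> e"
  unfolding perfect_matchings_def by blast

lemma perfect_matching_edge_unique:
  "M \<in> perfect_matchings V E \<Longrightarrow> v \<in> V \<Longrightarrow> e \<in> M \<Longrightarrow> e' \<in> M \<Longrightarrow> v \<in> e \<Longrightarrow> v \<in> e'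
    \<Longrightarrow> e = e'"
  unfolding perfect_matchings_def by blast

lemma finite_perfect_matching:
  assumes "M \<in> perfect_matchings V E" "finite V" "\<forall>e\<in>E. e \<subseteq> V"
  shows "finite M"
proof (rule finite_subset)
  show "M \<subseteq> Pow V" using assms(3) perfect_matching_subset[OF assms(1)] by blast
qed (use assms(2) in simp)

lemma card_eq_sum_card_Int_perfect_matching:
  assumes M: "M \<in> perfect_matchings V E" and "finite M" "finite S" "S \<subseteq> V"
  shows "card S = (\<Sum>e\<in>M. card (e \<inter> S))"
proof -
  have "S = (\<Union>e\<in>M. e \<inter> S)"
    using perfect_matching_covers[OF M] \<open>S \<subseteq> V\<close> by blast
  moreover have "card (\<Union>e\<in>M. e \<inter> S) = (\<Sum>e\<in>M. card (e \<inter> S))"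
  proof (rule card_UN_disjoint)
    show "\<forall>e\<in>M. \<forall>e'\<in>M. e \<noteq> e' \<longrightarrow> e \<inter> S \<inter> (e' \<inter> S) = {}"
      using perfect_matching_edge_unique[OF M] \<open>S \<subseteq> V\<close> by blast
  qed (use assms in auto)
  ultimately show ?thesis by simp
qed

lemma card_vertices_perfect_matching:
  assumes M: "M \<in> perfect_matchings V E" and "finite V"
    and E: "\<forall>e\<in>E. e \<subseteq> V \<and> card e = 2"
  shows "card V = 2 * card M"
proof -
  have "finite M" using finite_perfect_matching[OF M] assms by blast
  have "card V = (\<Sum>e\<in>M. card (e \<inter> V))"
    using card_eq_sum_card_Int_perfect_matching[OF M \<open>finite M\<close> \<open>finite V\<close>] by simp
  also have "\<dots> = (\<Sum>e\<in>M. 2)"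
    using perfect_matching_subset[OF M] E by (intro sum.cong) (auto simp: Int_absorb2)
  finally show ?thesis by simp
qed

lemma perfect_matchings_pendant_edges:
  assumes FE: "F \<subseteq> E" and FV: "\<forall>f\<in>F. f \<subseteq> V"
    and disj: "\<forall>f\<in>F. \<forall>f'\<in>F. f \<noteq> f' \<longrightarrow> f \<inter> f' = {}"
    and pendant: "\<forall>f\<in>F. \<exists>u\<in>f \<inter> V. \<forall>e\<in>E. u \<in> e \<longrightarrow> e = f"
  shows "perfect_matchings V E
    = (\<lambda>M. M \<union> F) ` perfect_matchings (V - \<Union>F) {e\<in>E. e \<inter> \<Union>F = {}}"
proof
  show "perfect_matchings V E
    \<subseteq> (\<lambda>M. M \<union> F) ` perfect_matchings (V - \<Union>F) {e\<in>E. e \<inter> \<Union>F = {}}"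
  proof
    fix M assume M: "M \<in> perfect_matchings V E"
    have "F \<subseteq> M"
    proof
      fix f assume "f \<in> F"
      then obtain u where "u \<in> f" "u \<in> V" "\<forall>e\<in>E. u \<in> e \<longrightarrow> e = f"
        using pendant by blast
      then show "f \<in> M"
        using perfect_matching_covers[OF M] perfect_matching_subset[OF M] by blast
    qed
    have avoid: "e \<inter> \<Union>F = {}" if e: "e \<in> M - F" for e
    proof (rule ccontr)
      assume "e \<inter> \<Union>F \<noteq> {}"
      then obtain v f where "v \<in> e" "v \<in> f" "f \<in> F" by blast
      then have "e = f"
        using perfect_matching_edge_unique[OF M] e \<open>F \<subseteq> M\<close> FV by blast
      with e \<open>f \<in> F\<close> show False by blast
    qed
    have "M - F \<in> perfect_matchings (V - \<Union>F) {e\<in>E. e \<inter> \<Union>F = {}}"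
    proof (intro perfect_matchingsI)
      show "\<exists>e\<in>M - F. v \<in> e" if "v \<in> V - \<Union>F" for v
        using perfect_matching_covers[OF M, of v] that by blast
      show "M - F \<subseteq> {e\<in>E. e \<inter> \<Union>F = {}}"
        using perfect_matching_subset[OF M] avoid by blast
      show "e = e'" if "v \<in> V - \<Union>F" "e \<in> M - F" "e' \<in> M - F" "v \<in> e" "v \<in> e'"
        for v e e'
        using that perfect_matching_edge_unique[OF M, of v e e'] by blast
    qed
    then show "M \<in> (\<lambda>M. M \<union> F) ` perfect_matchings (V - \<Union>F) {e\<in>E. e \<inter> \<Union>F = {}}"
      using \<open>F \<subseteq> M\<close> by (intro image_eqI[of _ _ "M - F"]) auto
  qed
next
  show "(\<lambda>M. M \<union> F) ` perfect_matchings (V - \<Union>F) {e\<in>E. e \<inter> \<Union>F = {}}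
    \<subseteq> perfect_matchings V E"
  proof (rule image_subsetI)
    fix M assume M: "M \<in> perfect_matchings (V - \<Union>F) {e\<in>E. e \<inter> \<Union>F = {}}"
    note sub = perfect_matching_subset[OF M]
    show "M \<union> F \<in> perfect_matchings V E"
    proof (rule perfect_matchingsI)
      show "M \<union> F \<subseteq> E" using sub FE by blast
      show "\<exists>e\<in>M \<union> F. v \<in> e" if "v \<in> V" for v
        using perfect_matching_covers[OF M, of v] that by blast
      show "e = e'" if "v \<in> V" "e \<in> M \<union> F" "e' \<in> M \<union> F" "v \<in> e" "v \<in> e'"
        for v e e'
        using that sub disj perfect_matching_edge_unique[OF M, of v e e'] by blast
    qed
  qed
qed

lemma card_perfect_matchings_pendant_edges:
  assumes "F \<subseteq> E" "\<forall>f\<in>F. f \<subseteq> V"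
    and "\<forall>f\<in>F. \<forall>f'\<in>F. f \<noteq> f' \<longrightarrow> f \<inter> f' = {}"
    and pendant: "\<forall>f\<in>F. \<exists>u\<in>f \<inter> V. \<forall>e\<in>E. u \<in> e \<longrightarrow> e = f"
  shows "card (perfect_matchings V E)
    = card (perfect_matchings (V - \<Union>F) {e\<in>E. e \<inter> \<Union>F = {}})"
  unfolding perfect_matchings_pendant_edges[OF assms]
proof (rule card_image, rule inj_onI)
  fix M M' assume M: "M \<in> perfect_matchings (V - \<Union>F) {e\<in>E. e \<inter> \<Union>F = {}}"
    and M': "M' \<in> perfect_matchings (V - \<Union>F) {e\<in>E. e \<inter> \<Union>F = {}}"
    and "M \<union> F = M' \<union> F"
  have "f \<notin> M" "f \<notin> M'" if "f \<in> F" for f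
  proof -
    obtain u where "u \<in> f" using pendant \<open>f \<in> F\<close> by blast
    then have "f \<inter> \<Union>F \<noteq> {}" using \<open>f \<in> F\<close> by blast
    then show "f \<notin> M" "f \<notin> M'"
      using perfect_matching_subset[OF M] perfect_matching_subset[OF M'] by auto
  qed
  then have "M \<inter> F = {}" "M' \<inter> F = {}" by blast+
  with \<open>M \<union> F = M' \<union> F\<close> show "M = M'" by blast
qed

lemma perfect_matchings_image:
  assumes f: "inj f"
  shows "perfect_matchings (f ` V) (image f ` E) = image (image f) ` perfect_matchings V E"
proof
  show "perfect_matchings (f ` V) (image f ` E) \<subseteq> image (image f) ` perfect_matchings V E"
  proof
    fix N assume N: "N \<in> perfect_matchings (f ` V) (image f ` E)"
    define M where "M = {e\<in>E. f ` e \<in> N}"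
    have "N = image f ` M"
      using perfect_matching_subset[OF N] unfolding M_def by blast
    moreover have "M \<in> perfect_matchings V E"
    proof (rule perfect_matchingsI)
      show "M \<subseteq> E" unfolding M_def by blast
      show "\<exists>e\<in>M. v \<in> e" if "v \<in> V" for v
      proof -
        obtain e' where "e' \<in> N" "f v \<in> e'"
          using perfect_matching_covers[OF N] \<open>v \<in> V\<close> by blast
        moreover obtain e where "e \<in> E" "e' = f ` e"
          using perfect_matching_subset[OF N] \<open>e' \<in> N\<close> by blast
        ultimately show ?thesis unfolding M_def by (auto simp: inj_image_mem_iff[OF f])
      qed
      show "e = e'" if "v \<in> V" "e \<in> M" "e' \<in> M" "v \<in> e" "v \<in> e'" for v e e'
        using that perfect_matching_edge_unique[OF N, of "f v" "f ` e" "f ` e'"]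
          inj_image_eq_iff[OF f] unfolding M_def by blast
    qed
    ultimately show "N \<in> image (image f) ` perfect_matchings V E" by blast
  qed
next
  show "image (image f) ` perfect_matchings V E \<subseteq> perfect_matchings (f ` V) (image f ` E)"
  proof (rule image_subsetI, rule perfect_matchingsI)
    fix M assume M: "M \<in> perfect_matchings V E"
    show "image f ` M \<subseteq> image f ` E" using perfect_matching_subset[OF M] by blast
    show "\<exists>e\<in>image f ` M. w \<in> e" if w: "w \<in> f ` V" for w
    proof -
      obtain v where "v \<in> V" "w = f v" using w by blast
      then obtain e where "e \<in> M" "v \<in> e" using perfect_matching_covers[OF M] by blast
      then show ?thesis using \<open>w = f v\<close> by blast
    qed
    show "e = e'" if "w \<in> f ` V" "e \<in> image f ` M" "e' \<in> image f ` M" "w \<in> e" "w \<in> e'"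
      for w e e'
      using that perfect_matching_edge_unique[OF M] inj_image_mem_iff[OF f] by blast
  qed
qed

lemma card_perfect_matchings_image:
  assumes "inj f"
  shows "card (perfect_matchings (f ` V) (image f ` E)) = card (perfect_matchings V E)"
proof -
  have "inj (image (image f))"
    using assms by (meson inj_on_image inj_on_subset subset_UNIV)
  then show ?thesis
    unfolding perfect_matchings_image[OF assms] by (simp add: card_image inj_on_subset)
qed

lemma finite_grid_vertices: "finite (grid_vertices m N)"
  unfolding grid_vertices_def by simp

lemma grid_edge_doubleton:
  assumes "e \<in> horiz_edges m N \<union> vert_edges m N C"
  shows "e \<subseteq> grid_vertices m N \<and> card e = 2"
  using assms unfolding horiz_edges_def vert_edges_def grid_vertices_def by auto

lemma grid_edgesE:
  assumes "e \<in> grid_edges m n"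
  obtains (horiz) i j where "e = {(i, j), (i, j + 1)}" "1 \<le> i" "i \<le> m" "1 \<le> j" "j + 1 \<le> n"
    | (vert) i j where "e = {(i, j), (i + 1, j)}" "1 \<le> i" "i + 1 \<le> m" "1 \<le> j" "j \<le> n"
  using assms unfolding grid_edges_def horiz_edges_def vert_edges_def by blast

lemma even_area_if_grid_perfect_matching:
  assumes "M \<in> perfect_matchings (grid_vertices m N) (horiz_edges m N \<union> vert_edges m N C)"
  shows "even (m * N)"
proof -
  have "card (grid_vertices m N) = 2 * card M"
    using card_vertices_perfect_matching[OF assms finite_grid_vertices] grid_edge_doubleton
    by blast
  moreover have "card (grid_vertices m N) = m * N"
    unfolding grid_vertices_def by (simp add: card_cartesian_product)
  ultimately show ?thesis by simp
qed

lemma card_odd_atLeastAtMost: "card {i \<in> {1..m::nat}. odd i} = (m + 1) div 2"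
proof (induction m)
  case (Suc m)
  have "{i \<in> {1..Suc m}. odd i}
      = {i \<in> {1..m}. odd i} \<union> (if odd (Suc m) then {Suc m} else {})"
    by (auto simp: le_Suc_eq)
  then show ?case using Suc by (auto simp: card_insert_if)
qed simp

lemma even_card_vertical_edges_iff:
  assumes M: "M \<in> perfect_matchings (grid_vertices m N) (horiz_edges m N \<union> vert_edges m N C)"
  shows "even (card (M - horiz_edges m N)) \<longleftrightarrow> even ((m + 1) div 2 * N)"
proof -
  define S where "S = {v \<in> grid_vertices m N. odd (fst v)}"
  have "finite M"
    using finite_perfect_matching[OF M finite_grid_vertices] grid_edge_doubleton by blast
  have horiz: "even (card (e \<inter> S))" if e: "e \<in> horiz_edges m N" for e
  proof -
    obtain i j where "e = {(i, j), (i, j + 1)}" "1 \<le> i" "i \<le> m" "1 \<le> j" "j + 1 \<le> N"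
      using e unfolding horiz_edges_def by blast
    then have "e \<inter> S = (if odd i then e else {})"
      unfolding S_def grid_vertices_def by auto
    with \<open>e = _\<close> show ?thesis by simp
  qed
  have vert: "card (e \<inter> S) = 1" if e: "e \<in> M - horiz_edges m N" for e
  proof -
    obtain i j where "e = {(i, j), (i + 1, j)}" "1 \<le> i" "i + 1 \<le> m" "1 \<le> j" "j \<le> N"
      using e perfect_matching_subset[OF M] unfolding vert_edges_def by blast
    then have "e \<inter> S = (if odd i then {(i, j)} else {(i + 1, j)})"
      unfolding S_def grid_vertices_def by auto
    then show ?thesis by simp
  qed
  have S_eq: "S = {i \<in> {1..m}. odd i} \<times> {1..N}"
    unfolding S_def grid_vertices_def by auto
  have "(m + 1) div 2 * N = card S"
    unfolding S_eq card_cartesian_product card_odd_atLeastAtMost by simp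
  also have "\<dots> = (\<Sum>e\<in>M. card (e \<inter> S))"
    by (rule card_eq_sum_card_Int_perfect_matching[OF M \<open>finite M\<close>])
      (auto simp: S_def finite_grid_vertices)
  also have "\<dots> = (\<Sum>e\<in>M \<inter> horiz_edges m N. card (e \<inter> S))
      + (\<Sum>e\<in>M - horiz_edges m N. card (e \<inter> S))"
    by (rule sum.Int_Diff[OF \<open>finite M\<close>])
  also have "(\<Sum>e\<in>M - horiz_edges m N. card (e \<inter> S)) = card (M - horiz_edges m N)"
    using vert by simp
  moreover have "even (\<Sum>e\<in>M \<inter> horiz_edges m N. card (e \<inter> S))"
    using horiz by (intro dvd_sum) blast
  ultimately show ?thesis by simp
qed

lemma eps_eq_neg_one_power:
  assumes "even (m * (n + 4))"
  shows "eps m n = (-1) ^ ((m + 1) div 2 * (n + 4))"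
proof (cases "even m")
  case True
  then obtain k where "m = 2 * k" by blast
  then have "(m + 1) div 2 = k" "m mod 4 = 2 \<longleftrightarrow> odd k" by presburger+
  then show ?thesis unfolding eps_def minus_one_power_iff by auto
next
  case False
  with assms have "even n" by simp
  moreover have "m mod 4 \<noteq> 2" using False by presburger
  ultimately show ?thesis unfolding eps_def by simp
qed

lemma calG_minus_two_minus:
  "calG m (-2 - int n) =
    (grid_vertices m (n + 4), horiz_edges m (n + 4) \<union> vert_edges m (n + 4) {2..n + 3},
     \<lambda>e. if e \<in> horiz_edges m (n + 4) then 1 else -1)"
proof -
  have "nat (2 - (-2 - int n)) = n + 4" "nat (1 - (-2 - int n)) = n + 3" by simp_all
  then show ?thesis unfolding calG_def Let_def by simp
qed

lemma matching_sign_calG: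
  assumes "M \<in> signed_pms (calG m (-2 - int n))"
  shows "matching_sign (calG m (-2 - int n)) M = eps m n"
proof -
  let ?H = "horiz_edges m (n + 4)"
  have M: "M \<in> perfect_matchings (grid_vertices m (n + 4))
      (?H \<union> vert_edges m (n + 4) {2..n + 3})"
    using assms by (simp add: signed_pms_def calG_minus_two_minus)
  have "finite M"
    using finite_perfect_matching[OF M finite_grid_vertices] grid_edge_doubleton by blast
  have "matching_sign (calG m (-2 - int n)) M = (\<Prod>e\<in>M. if e \<in> ?H then 1 else -1)"
    by (simp add: matching_sign_def calG_minus_two_minus)
  also have "\<dots> = (-1) ^ card (M - ?H)"
    using \<open>finite M\<close> by (simp add: prod.If_cases Diff_eq)
  also have "\<dots> = (-1) ^ ((m + 1) div 2 * (n + 4))"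
    using even_card_vertical_edges_iff[OF M] by (simp add: minus_one_power_iff)
  also have "\<dots> = eps m n"
    using eps_eq_neg_one_power even_area_if_grid_perfect_matching[OF M] by simp
  finally show ?thesis .
qed

definition forced_end_edges :: "nat \<Rightarrow> nat \<Rightarrow> edge set" where
  "forced_end_edges m n = {{(i, c), (i, c + 1)} | i c. i \<in> {1..m} \<and> c \<in> {1, n + 3}}"

lemma forced_end_edgesE:
  assumes "f \<in> forced_end_edges m n"
  obtains i c where "f = {(i, c), (i, c + 1)}" "i \<in> {1..m}" "c \<in> {1, n + 3}"
  using assms unfolding forced_end_edges_def by blast

lemma Union_forced_end_edges: "\<Union>(forced_end_edges m n) = {1..m} \<times> {1, 2, n + 3, n + 4}"
proof (intro equalityI subsetI)
  fix v assume "v \<in> \<Union>(forced_end_edges m n)"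
  then obtain f where "f \<in> forced_end_edges m n" "v \<in> f" by blast
  then show "v \<in> {1..m} \<times> {1, 2, n + 3, n + 4}" by (auto elim!: forced_end_edgesE)
next
  fix v assume "v \<in> {1..m} \<times> {1, 2, n + 3, n + 4}"
  then obtain i j where "v = (i, j)" "i \<in> {1..m}" "j \<in> {1, 2, n + 3, n + 4}" by blast
  moreover define c where "c = (if j \<le> 2 then 1 else n + 3)"
  then have "c \<in> {1, n + 3}" "j \<in> {c, c + 1}"
    using \<open>j \<in> {1, 2, n + 3, n + 4}\<close> by auto
  ultimately have "{(i, c), (i, c + 1)} \<in> forced_end_edges m n" "v \<in> {(i, c), (i, c + 1)}"
    unfolding forced_end_edges_def by blast+
  then show "v \<in> \<Union>(forced_end_edges m n)" by blast
qed

lemma forced_end_edges_subset: "forced_end_edges m n \<subseteq> horiz_edges m (n + 4)"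
proof
  fix f assume "f \<in> forced_end_edges m n"
  then obtain i c where "f = {(i, c), (i, c + 1)}" "i \<in> {1..m}" "c \<in> {1, n + 3}"
    by (rule forced_end_edgesE)
  moreover have "1 \<le> i" "i \<le> m" "1 \<le> c" "c + 1 \<le> n + 4"
    using \<open>i \<in> {1..m}\<close> \<open>c \<in> {1, n + 3}\<close> by auto
  ultimately show "f \<in> horiz_edges m (n + 4)"
    unfolding horiz_edges_def by blast
qed

lemma forced_end_edges_disjoint:
  "\<forall>f\<in>forced_end_edges m n. \<forall>f'\<in>forced_end_edges m n. f \<noteq> f' \<longrightarrow> f \<inter> f' = {}"
  by (auto elim!: forced_end_edgesE)

lemma forced_end_edges_pendant:
  assumes "f \<in> forced_end_edges m n"
  shows "\<exists>u\<in>f \<inter> grid_vertices m (n + 4).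
           \<forall>e\<in>horiz_edges m (n + 4) \<union> vert_edges m (n + 4) {2..n + 3}. u \<in> e \<longrightarrow> e = f"
proof -
  obtain i c where f: "f = {(i, c), (i, c + 1)}" "i \<in> {1..m}" "c \<in> {1, n + 3}"
    using assms by (rule forced_end_edgesE)
  define u where "u = (if c = 1 then (i, 1) else (i, n + 4))"
  have "u \<in> f \<inter> grid_vertices m (n + 4)"
    using f unfolding u_def grid_vertices_def by auto
  moreover have "e = f"
    if "e \<in> horiz_edges m (n + 4) \<union> vert_edges m (n + 4) {2..n + 3}" "u \<in> e" for e
    using that f unfolding u_def horiz_edges_def vert_edges_def by auto
  ultimately show ?thesis by blast
qed

lemma grid_vertices_minus_end_columns:
  "grid_vertices m (n + 4) - {1..m} \<times> {1, 2, n + 3, n + 4}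
     = (\<lambda>(i, j). (i, j + 2)) ` grid_vertices m n"
proof (intro equalityI subsetI)
  fix v assume "v \<in> grid_vertices m (n + 4) - {1..m} \<times> {1, 2, n + 3, n + 4}"
  then obtain i j where "v = (i, j)" "i \<in> {1..m}" "j \<in> {3..n + 2}"
    unfolding grid_vertices_def by force
  then have "v = (\<lambda>(i, j). (i, j + 2)) (i, j - 2)" "(i, j - 2) \<in> grid_vertices m n"
    unfolding grid_vertices_def by auto
  then show "v \<in> (\<lambda>(i, j). (i, j + 2)) ` grid_vertices m n" by blast
qed (auto simp: grid_vertices_def)

lemma grid_edges_avoiding_end_columns:
  "{e \<in> horiz_edges m (n + 4) \<union> vert_edges m (n + 4) {2..n + 3}.
      e \<inter> {1..m} \<times> {1, 2, n + 3, n + 4} = {}}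
     = image (\<lambda>(i, j). (i, j + 2)) ` grid_edges m n"
  (is "?E = image ?sh ` _")
proof (intro equalityI subsetI)
  fix e assume e: "e \<in> ?E"
  then consider
      (horiz) i j where "e = {(i, j), (i, j + 1)}" "1 \<le> i" "i \<le> m" "1 \<le> j" "j + 1 \<le> n + 4"
    | (vert) i j where "e = {(i, j), (i + 1, j)}" "1 \<le> i" "i + 1 \<le> m" "2 \<le> j" "j \<le> n + 3"
    unfolding horiz_edges_def vert_edges_def by auto
  then show "e \<in> image ?sh ` grid_edges m n"
  proof cases
    case horiz
    with e have "1 \<le> j - 2" "j - 2 + 1 \<le> n" by auto
    with horiz have "{(i, j - 2), (i, j - 2 + 1)} \<in> grid_edges m n"
      unfolding grid_edges_def horiz_edges_def by blast
    moreover have "e = ?sh ` {(i, j - 2), (i, j - 2 + 1)}"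
      using horiz \<open>1 \<le> j - 2\<close> by auto
    ultimately show ?thesis by blast
  next
    case vert
    with e have "1 \<le> j - 2" "j - 2 \<le> n" by auto
    with vert have "{(i, j - 2), (i + 1, j - 2)} \<in> grid_edges m n"
      unfolding grid_edges_def vert_edges_def by blast
    moreover have "e = ?sh ` {(i, j - 2), (i + 1, j - 2)}"
      using vert \<open>1 \<le> j - 2\<close> by auto
    ultimately show ?thesis by blast
  qed
next
  fix e assume "e \<in> image ?sh ` grid_edges m n"
  then obtain e' where "e' \<in> grid_edges m n" "e = ?sh ` e'" by blast
  then show "e \<in> ?E"
  proof (cases rule: grid_edgesE)
    case (horiz i j)
    then have "1 \<le> j + 2" "j + 2 + 1 \<le> n + 4" by simp_all
    with horiz have "{(i, j + 2), (i, j + 2 + 1)} \<in> horiz_edges m (n + 4)"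
      unfolding horiz_edges_def by blast
    with horiz \<open>e = _\<close> show ?thesis by auto
  next
    case (vert i j)
    then have "1 \<le> j + 2" "j + 2 \<le> n + 4" "j + 2 \<in> {2..n + 3}" by simp_all
    with vert have "{(i, j + 2), (i + 1, j + 2)} \<in> vert_edges m (n + 4) {2..n + 3}"
      unfolding vert_edges_def by blast
    with vert \<open>e = _\<close> show ?thesis by auto
  qed
qed

lemma card_signed_pms_calG: "card (signed_pms (calG m (-2 - int n))) = T m n"
proof -
  let ?V = "grid_vertices m (n + 4)"
  let ?E = "horiz_edges m (n + 4) \<union> vert_edges m (n + 4) {2..n + 3}"
  let ?F = "forced_end_edges m n"
  let ?sh = "\<lambda>(i, j). (i :: nat, j + 2 :: nat)"
  have "card (signed_pms (calG m (-2 - int n))) = card (perfect_matchings ?V ?E)"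
    by (simp add: signed_pms_def calG_minus_two_minus)
  also have "\<dots> = card (perfect_matchings (?V - \<Union>?F) {e\<in>?E. e \<inter> \<Union>?F = {}})"
  proof (rule card_perfect_matchings_pendant_edges)
    show "?F \<subseteq> ?E" using forced_end_edges_subset by blast
    show "\<forall>f\<in>?F. f \<subseteq> ?V" using forced_end_edges_subset grid_edge_doubleton by blast
  qed (use forced_end_edges_disjoint forced_end_edges_pendant in blast)+
  also have "\<dots> = card (perfect_matchings (?sh ` grid_vertices m n) (image ?sh ` grid_edges m n))"
    unfolding Union_forced_end_edges grid_vertices_minus_end_columns
      grid_edges_avoiding_end_columns ..
  also have "\<dots> = T m n"
    unfolding T_def by (rule card_perfect_matchings_image) (simp add: inj_on_def)
  finally show ?thesis .
qed

theorem mainTheorem7: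
  fixes m n :: nat
  assumes "m \<ge> 1" and "n \<ge> 1"
  shows "M_signed (calG m (-2 - int n)) = eps m n * int (T m n)
         \<and> (\<forall>M\<in>signed_pms (calG m (-2 - int n)). matching_sign (calG m (-2 - int n)) M = eps m n)"
proof -
  let ?G = "calG m (-2 - int n)"
  have sign: "\<forall>M\<in>signed_pms ?G. matching_sign ?G M = eps m n"
    using matching_sign_calG by blast
  have "M_signed ?G = (\<Sum>M\<in>signed_pms ?G. matching_sign ?G M)"
    by (simp add: M_signed_def signed_pms_def)
  also have "\<dots> = (\<Sum>M\<in>signed_pms ?G. eps m n)"
    using sign by simp
  also have "\<dots> = eps m n * int (T m n)"
    by (simp add: card_signed_pms_calG)
  finally show ?thesis using sign by blast
qed

end
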